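(* Let $a>1$ and let $f$ be a continuous and bounded real function on $X=[0,\infty)\times[0,\infty)$. For all $m,n\in\mathbb{N}$ and $(x,y)\in X$, \[ |\hat{Y}_{m,n,a}(f;x,y)-f(x,y)|\leq 2\,\omega(f;\delta_{m,n}), \qquad |\hat{Y}_{m,n,a}(f;x,y)-f(x,y)|\leq 2\{\omega_1(f,\delta_m)+\omega_2(f,\delta_n)\}, \] where \[ \delta_m=\sqrt{\frac{x\left(m^2x(a^{1/m}-1)^2-(a^{1/m}-1)\log a\,(2mx-1)+x(\log a)^2\right)}{m^2(a^{1/m}-1)^2}}, \] \[ \delta_n=\sqrt{\frac{y\left(n^2y(a^{1/n}-1)^2-(a^{1/n}-1)\log a\,(2ny-1)+y(\log a)^2\right)}{n^2(a^{1/n}-1)^2}}, \] and $\delta_{m,n}=\sqrt{\delta_m^2+\delta_n^2}$.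
   Context: For $m,n\in\mathbb{N}$, $(x,y)\in X$ and integers $k_1,k_2\ge0$ let \[ s_{m,n,k_1,k_2}^a(x,y)=a^{-\frac{x}{a^{1/m}-1}}\,a^{-\frac{y}{a^{1/n}-1}}\,\frac{x^{k_1}y^{k_2}(\log a)^{k_1+k_2}}{(a^{1/m}-1)^{k_1}(a^{1/n}-1)^{k_2}\,k_1!\,k_2!}, \] \[ \hat{Y}_{m,n,a}(f;x,y)=\sum_{k_1=0}^{\infty}\sum_{k_2=0}^{\infty}s_{m,n,k_1,k_2}^a(x,y)\,f\!\left(\tfrac{k_1}{m},\tfrac{k_2}{n}\right). \] (The quantities $\delta_m^2,\delta_n^2$ are $\hat{Y}_{m,n,a}((t-x)^2;x,y)$ and $\hat{Y}_{m,n,a}((s-y)^2;x,y)$.) The total modulus of continuity is $\omega(f,\delta)=\sup\{|f(t,s)-f(x,y)|:(t,s),(x,y)\in X,\ \sqrt{(t-x)^2+(s-y)^2}\le\delta\}$; the partial moduli are $\omega_1(f,\delta)=\sup\{|f(u_1,y)-f(u_2,y)|:u_1,u_2,y\ge0,\ |u_1-u_2|\le\delta\}$ and $\omega_2(f,\delta)=\sup\{|f(x,v_1)-f(x,v_2)|:x,v_1,v_2\ge0,\ |v_1-v_2|\le\delta\}$. *)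

theory Defs
  imports "HOL-Analysis.Analysis"
begin

definition quadrant :: "(real \<times> real) set" where
  "quadrant = {p. fst p \<ge> 0 \<and> snd p \<ge> 0}"

definition s_kernel :: "real \<Rightarrow> nat \<Rightarrow> nat \<Rightarrow> nat \<Rightarrow> nat \<Rightarrow> real \<Rightarrow> real \<Rightarrow> real" where
  "s_kernel a m n k1 k2 x y =
     a powr (- x / (a powr (1 / real m) - 1)) * a powr (- y / (a powr (1 / real n) - 1)) *
     (x ^ k1 * y ^ k2 * (ln a) ^ (k1 + k2) /
      ((a powr (1 / real m) - 1) ^ k1 * (a powr (1 / real n) - 1) ^ k2 * fact k1 * fact k2))"

definition Yhat :: "real \<Rightarrow> nat \<Rightarrow> nat \<Rightarrow> (real \<times> real \<Rightarrow> real) \<Rightarrow> real \<Rightarrow> real \<Rightarrow> real" where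
  "Yhat a m n f x y =
     (\<Sum>k1. \<Sum>k2. s_kernel a m n k1 k2 x y * f (real k1 / real m, real k2 / real n))"

definition total_modulus :: "(real \<times> real \<Rightarrow> real) \<Rightarrow> real \<Rightarrow> real" where
  "total_modulus f \<delta> = Sup {\<bar>f (t, s) - f (x, y)\<bar> | t s x y.
      (t, s) \<in> quadrant \<and> (x, y) \<in> quadrant \<and> sqrt ((t - x)^2 + (s - y)^2) \<le> \<delta>}"

definition partial_modulus1 :: "(real \<times> real \<Rightarrow> real) \<Rightarrow> real \<Rightarrow> real" where
  "partial_modulus1 f \<delta> = Sup {\<bar>f (u1, y) - f (u2, y)\<bar> | u1 u2 y.
      u1 \<ge> 0 \<and> u2 \<ge> 0 \<and> y \<ge> 0 \<and> \<bar>u1 - u2\<bar> \<le> \<delta>}"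

definition partial_modulus2 :: "(real \<times> real \<Rightarrow> real) \<Rightarrow> real \<Rightarrow> real" where
  "partial_modulus2 f \<delta> = Sup {\<bar>f (x, v1) - f (x, v2)\<bar> | x v1 v2.
      x \<ge> 0 \<and> v1 \<ge> 0 \<and> v2 \<ge> 0 \<and> \<bar>v1 - v2\<bar> \<le> \<delta>}"

definition delta_m :: "real \<Rightarrow> nat \<Rightarrow> real \<Rightarrow> real" where
  "delta_m a m x = sqrt (x * (real m ^ 2 * x * (a powr (1 / real m) - 1)^2
      - (a powr (1 / real m) - 1) * ln a * (2 * real m * x - 1) + x * (ln a)^2)
      / (real m ^ 2 * (a powr (1 / real m) - 1)^2))"

end

theory Submission
  imports Defs
begin

(* The kernel factorises into two Poisson distributions, with rates x ln a / (a^(1/m) - 1) and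
   y ln a / (a^(1/n) - 1), so Yhat is a positive linear operator reproducing constants, and
   delta_m^2, delta_n^2 are the second moments of the nodes k/m, k/n about x, y.  Chaining a
   segment of length rho into ceiling(rho/delta) pieces of length at most delta gives
   |f p - f q| <= (1 + rho^2/delta^2) omega(f, delta); averaging against the kernel and choosing
   delta as the root mean square distance yields the factor 2. *)

definition probability_weights :: "(nat \<Rightarrow> real) \<Rightarrow> bool" where
  "probability_weights P \<longleftrightarrow> (\<forall>k. P k \<ge> 0) \<and> P sums 1"

lemma weighted_sum_deviation_le:
  fixes P F u :: "nat \<Rightarrow> real"
  assumes P: "probability_weights P" and moment: "(\<lambda>k. P k * u k) sums d"
    and pointwise: "\<And>k. P k \<noteq> 0 \<Longrightarrow> \<bar>F k - c\<bar> \<le> A + B * u k"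
  shows "summable (\<lambda>k. P k * F k)" and "\<bar>(\<Sum>k. P k * F k) - c\<bar> \<le> A + B * d"
proof -
  have P_nonneg: "P k \<ge> 0" and P_sums: "P sums 1" for k
    using P by (auto simp: probability_weights_def)
  define G where "G = (\<lambda>k. P k * (F k - c))"
  have majorant: "(\<lambda>k. P k * (A + B * u k)) sums (A + B * d)"
    using sums_add[OF sums_mult[OF P_sums, of A] sums_mult[OF moment, of B]]
    by (simp add: algebra_simps)
  have G_le: "\<bar>G k\<bar> \<le> P k * (A + B * u k)" for k
  proof (cases "P k = 0")
    case False
    then show ?thesis
      using mult_left_mono[OF pointwise[OF False] P_nonneg[of k]] P_nonneg[of k]
      by (simp add: G_def abs_mult)
  qed (simp add: G_def)
  have abs_G: "summable (\<lambda>k. \<bar>G k\<bar>)"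
    using G_le sums_summable[OF majorant] by (intro summable_rabs_comparison_test) auto
  have "(\<lambda>k. G k + c * P k) = (\<lambda>k. P k * F k)"
    by (simp add: fun_eq_iff G_def algebra_simps)
  then show summable: "summable (\<lambda>k. P k * F k)"
    using summable_add[OF summable_rabs_cancel[OF abs_G] sums_summable[OF sums_mult[OF P_sums]]]
    by metis
  have G_sums: "G sums ((\<Sum>k. P k * F k) - c)"
    using sums_diff[OF summable_sums[OF summable] sums_mult[OF P_sums, of c]]
    by (simp add: G_def algebra_simps)
  have "\<bar>\<Sum>k. G k\<bar> \<le> (\<Sum>k. \<bar>G k\<bar>)"
    using abs_G by (rule summable_rabs)
  also have "\<dots> \<le> A + B * d"
    by (rule sums_le[OF G_le summable_sums[OF abs_G] majorant])
  finally show "\<bar>(\<Sum>k. P k * F k) - c\<bar> \<le> A + B * d"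
    using G_sums by (simp add: sums_iff)
qed

lemma double_weighted_sum_deviation_le:
  fixes P Q u v :: "nat \<Rightarrow> real" and F :: "nat \<Rightarrow> nat \<Rightarrow> real"
  assumes P: "probability_weights P" and P_moment: "(\<lambda>i. P i * u i) sums d1"
    and Q: "probability_weights Q" and Q_moment: "(\<lambda>j. Q j * v j) sums d2"
    and pointwise: "\<And>i j. P i \<noteq> 0 \<Longrightarrow> Q j \<noteq> 0 \<Longrightarrow> \<bar>F i j - c\<bar> \<le> A + B * u i + C * v j"
  shows "\<bar>(\<Sum>i. \<Sum>j. P i * Q j * F i j) - c\<bar> \<le> A + B * d1 + C * d2"
proof -
  define I where "I i = (\<Sum>j. Q j * F i j)" for i
  have inner: "summable (\<lambda>j. Q j * F i j)" "\<bar>I i - c\<bar> \<le> (A + C * d2) + B * u i"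
    if "P i \<noteq> 0" for i
    using weighted_sum_deviation_le[OF Q Q_moment, of "F i" c "A + B * u i" C] pointwise[OF that]
    by (simp_all add: I_def algebra_simps)
  have "(\<Sum>j. P i * Q j * F i j) = P i * I i" for i
    using inner(1)[of i] by (cases "P i = 0") (simp_all add: I_def suminf_mult mult.assoc)
  then show ?thesis
    using weighted_sum_deviation_le(2)[OF P P_moment, of I c "A + C * d2" B] inner(2)
    by (simp add: algebra_simps)
qed

lemma second_moment_zero_imp_eq:
  assumes "probability_weights P" "(\<lambda>k. P k * (s k - x)\<^sup>2) sums 0" "P k \<noteq> 0"
  shows "s k = x"
proof -
  have "\<forall>k. P k * (s k - x)\<^sup>2 = 0"
    using assms(1,2) suminf_eq_zero_iff[of "\<lambda>k. P k * (s k - x)\<^sup>2"]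
    by (auto simp: probability_weights_def sums_iff)
  then have "P k * (s k - x)\<^sup>2 = 0"
    by blast
  then show ?thesis
    using assms(3) by simp
qed

lemma abs_diff_le_modulus_quadratic:
  fixes f :: "'a::real_normed_vector \<Rightarrow> real"
  assumes "convex S" "p \<in> S" "q \<in> S" "\<delta> > 0"
    and modulus: "\<And>u v. u \<in> S \<Longrightarrow> v \<in> S \<Longrightarrow> dist u v \<le> \<delta> \<Longrightarrow> \<bar>f u - f v\<bar> \<le> W"
  shows "\<bar>f p - f q\<bar> \<le> W + W / \<delta>\<^sup>2 * (dist p q)\<^sup>2"
proof -
  define r where "r = dist p q / \<delta>"
  define N where "N = max 1 (nat \<lceil>r\<rceil>)"
  define z where "z i = (1 - real i / N) *\<^sub>R q + (real i / N) *\<^sub>R p" for i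
  have "W \<ge> 0"
    using modulus[of p p] assms by simp
  have "N \<ge> 1" "real N \<ge> r"
    unfolding N_def by linarith+
  have N_le: "real N \<le> 1 + r\<^sup>2"
  proof (cases "r \<le> 1")
    case True
    then show ?thesis by (simp add: N_def)
  next
    case False
    then have "real N < r + 1"
      unfolding N_def by linarith
    also have "r \<le> r\<^sup>2"
      using False by (simp add: power2_eq_square)
    finally show ?thesis by simp
  qed
  have z_in: "z i \<in> S" if "i \<le> N" for i
    unfolding z_def using that \<open>N \<ge> 1\<close> by (intro convexD assms) auto
  have z_step: "dist (z (Suc i)) (z i) \<le> \<delta>" for i
  proof -
    have "z (Suc i) - z i = (1 / N) *\<^sub>R (p - q)"
      by (simp add: z_def algebra_simps diff_divide_distrib add_divide_distrib)
    then have "dist (z (Suc i)) (z i) = r * \<delta> / N"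
      using \<open>\<delta> > 0\<close> by (simp add: dist_norm r_def norm_minus_commute)
    also have "\<dots> \<le> \<delta>"
      using \<open>real N \<ge> r\<close> \<open>N \<ge> 1\<close> \<open>\<delta> > 0\<close> by (simp add: field_simps)
    finally show ?thesis .
  qed
  have "z N = p" "z 0 = q"
    using \<open>N \<ge> 1\<close> by (simp_all add: z_def)
  then have "f p - f q = (\<Sum>i<N. f (z (Suc i)) - f (z i))"
    using sum_lessThan_telescope[of "\<lambda>i. f (z i)" N] by simp
  then have "\<bar>f p - f q\<bar> \<le> (\<Sum>i<N. \<bar>f (z (Suc i)) - f (z i)\<bar>)"
    by simp
  also have "\<dots> \<le> N * W"
    using sum_mono[of "{..<N}" "\<lambda>i. \<bar>f (z (Suc i)) - f (z i)\<bar>" "\<lambda>_. W"]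
      modulus z_in z_step by simp
  also have "\<dots> \<le> (1 + r\<^sup>2) * W"
    using N_le \<open>W \<ge> 0\<close> by (rule mult_right_mono)
  also have "\<dots> = W + W / \<delta>\<^sup>2 * (dist p q)\<^sup>2"
    by (simp add: r_def power_divide algebra_simps)
  finally show ?thesis .
qed

lemma convex_quadrant: "convex quadrant"
proof -
  have "quadrant = {0..} \<times> {0..}"
    by (auto simp: quadrant_def)
  then show ?thesis
    by (metis convex_Times convex_real_interval(1))
qed

lemma mem_quadrant_iff [simp]: "(t, s) \<in> quadrant \<longleftrightarrow> t \<ge> 0 \<and> s \<ge> 0"
  by (simp add: quadrant_def)

lemma bdd_above_abs_diff:
  fixes f :: "'a \<Rightarrow> real"
  assumes "bounded (f ` A)"
  shows "bdd_above {\<bar>f p - f q\<bar> | p q. p \<in> A \<and> q \<in> A}"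
proof -
  obtain M where M: "\<And>p. p \<in> A \<Longrightarrow> \<bar>f p\<bar> \<le> M"
    using assms by (auto simp: bounded_real)
  have "\<bar>f p - f q\<bar> \<le> 2 * M" if "p \<in> A" "q \<in> A" for p q
    using M[OF that(1)] M[OF that(2)] abs_triangle_ineq4[of "f p" "f q"] by linarith
  then show ?thesis
    by (intro bdd_aboveI[of _ "2 * M"]) blast
qed

lemma total_modulus_ge:
  assumes "bounded (f ` quadrant)" "p \<in> quadrant" "q \<in> quadrant" "dist p q \<le> \<delta>"
  shows "\<bar>f p - f q\<bar> \<le> total_modulus f \<delta>"
  unfolding total_modulus_def
proof (rule cSup_upper)
  obtain t s x y where "p = (t, s)" "q = (x, y)"
    by fastforce
  then show "\<bar>f p - f q\<bar> \<in> {\<bar>f (t, s) - f (x, y)\<bar> | t s x y. (t, s) \<in> quadrant \<and> (x, y) \<in> quadrant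
      \<and> sqrt ((t - x)\<^sup>2 + (s - y)\<^sup>2) \<le> \<delta>}"
    using assms(2-4) by (auto simp: dist_Pair_Pair dist_real_def)
  show "bdd_above {\<bar>f (t, s) - f (x, y)\<bar> | t s x y. (t, s) \<in> quadrant \<and> (x, y) \<in> quadrant
      \<and> sqrt ((t - x)\<^sup>2 + (s - y)\<^sup>2) \<le> \<delta>}"
    by (rule bdd_above_mono[OF bdd_above_abs_diff[OF assms(1)]]) blast
qed

lemma partial_modulus1_ge:
  assumes "bounded (f ` quadrant)" "u1 \<ge> 0" "u2 \<ge> 0" "y \<ge> 0" "\<bar>u1 - u2\<bar> \<le> \<delta>"
  shows "\<bar>f (u1, y) - f (u2, y)\<bar> \<le> partial_modulus1 f \<delta>"
  unfolding partial_modulus1_def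
proof (rule cSup_upper)
  show "bdd_above {\<bar>f (u1, y) - f (u2, y)\<bar> | u1 u2 y.
      u1 \<ge> 0 \<and> u2 \<ge> 0 \<and> y \<ge> 0 \<and> \<bar>u1 - u2\<bar> \<le> \<delta>}"
    by (rule bdd_above_mono[OF bdd_above_abs_diff[OF assms(1)]]) force
qed (use assms in blast)

lemma partial_modulus2_ge:
  assumes "bounded (f ` quadrant)" "x \<ge> 0" "v1 \<ge> 0" "v2 \<ge> 0" "\<bar>v1 - v2\<bar> \<le> \<delta>"
  shows "\<bar>f (x, v1) - f (x, v2)\<bar> \<le> partial_modulus2 f \<delta>"
  unfolding partial_modulus2_def
proof (rule cSup_upper)
  show "bdd_above {\<bar>f (x, v1) - f (x, v2)\<bar> | x v1 v2.
      x \<ge> 0 \<and> v1 \<ge> 0 \<and> v2 \<ge> 0 \<and> \<bar>v1 - v2\<bar> \<le> \<delta>}"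
    by (rule bdd_above_mono[OF bdd_above_abs_diff[OF assms(1)]]) force
qed (use assms in blast)

lemma abs_diff_le_total_modulus:
  assumes "bounded (f ` quadrant)" "p \<in> quadrant" "q \<in> quadrant" "\<delta> > 0"
  shows "\<bar>f p - f q\<bar> \<le> total_modulus f \<delta> + total_modulus f \<delta> / \<delta>\<^sup>2 * (dist p q)\<^sup>2"
  using convex_quadrant assms(2-4) total_modulus_ge[OF assms(1)]
  by (rule abs_diff_le_modulus_quadratic)

lemma abs_diff_le_partial_modulus1:
  assumes "bounded (f ` quadrant)" "t \<ge> 0" "x \<ge> 0" "s \<ge> 0" "\<delta> > 0"
  shows "\<bar>f (t, s) - f (x, s)\<bar> \<le> partial_modulus1 f \<delta> + partial_modulus1 f \<delta> / \<delta>\<^sup>2 * (t - x)\<^sup>2"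
  using abs_diff_le_modulus_quadratic[of "{0..}" t x \<delta> "\<lambda>u. f (u, s)"]
    assms partial_modulus1_ge[OF assms(1)]
  by (simp add: dist_real_def)

lemma abs_diff_le_partial_modulus2:
  assumes "bounded (f ` quadrant)" "x \<ge> 0" "s \<ge> 0" "y \<ge> 0" "\<delta> > 0"
  shows "\<bar>f (x, s) - f (x, y)\<bar> \<le> partial_modulus2 f \<delta> + partial_modulus2 f \<delta> / \<delta>\<^sup>2 * (s - y)\<^sup>2"
  using abs_diff_le_modulus_quadratic[of "{0..}" s y \<delta> "\<lambda>v. f (x, v)"]
    assms partial_modulus2_ge[OF assms(1)]
  by (simp add: dist_real_def)

lemma product_operator_deviation_le_total_modulus:
  fixes f :: "real \<times> real \<Rightarrow> real" and P Q s t :: "nat \<Rightarrow> real"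
  assumes f: "bounded (f ` quadrant)" and "x \<ge> 0" "y \<ge> 0" "\<And>i. s i \<ge> 0" "\<And>j. t j \<ge> 0"
    and P: "probability_weights P" and P_moment: "(\<lambda>i. P i * (s i - x)\<^sup>2) sums d1\<^sup>2"
    and Q: "probability_weights Q" and Q_moment: "(\<lambda>j. Q j * (t j - y)\<^sup>2) sums d2\<^sup>2"
  shows "\<bar>(\<Sum>i. \<Sum>j. P i * Q j * f (s i, t j)) - f (x, y)\<bar>
           \<le> 2 * total_modulus f (sqrt (d1\<^sup>2 + d2\<^sup>2))"
proof -
  define D where "D = sqrt (d1\<^sup>2 + d2\<^sup>2)"
  define W where "W = total_modulus f D"
  have D_sq: "D\<^sup>2 = d1\<^sup>2 + d2\<^sup>2"
    by (simp add: D_def)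
  have "W \<ge> 0"
    using total_modulus_ge[OF f, of "(0, 0)" "(0, 0)" D] by (simp add: W_def D_def)
  have "\<bar>f (s i, t j) - f (x, y)\<bar> \<le> W + W / D\<^sup>2 * (s i - x)\<^sup>2 + W / D\<^sup>2 * (t j - y)\<^sup>2"
    if "P i \<noteq> 0" "Q j \<noteq> 0" for i j
  proof (cases "D = 0")
    case True
    \<comment> \<open>All weight then sits at \<open>(x, y)\<close>, and \<open>W / D\<^sup>2 = 0\<close> reduces the bound to \<open>W\<close>.\<close>
    then have "s i = x" "t j = y"
      using D_sq P_moment Q_moment second_moment_zero_imp_eq[OF P _ that(1)]
        second_moment_zero_imp_eq[OF Q _ that(2)]
      by (simp_all add: add_nonneg_eq_0_iff)
    then show ?thesis
      using \<open>W \<ge> 0\<close> by simp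
  next
    case False
    moreover have "D \<ge> 0"
      by (simp add: D_def)
    ultimately have "D > 0"
      by simp
    with abs_diff_le_total_modulus[OF f, of "(s i, t j)" "(x, y)" D] show ?thesis
      using assms(2-5) by (simp add: W_def dist_Pair_Pair dist_real_def algebra_simps)
  qed
  then have "\<bar>(\<Sum>i. \<Sum>j. P i * Q j * f (s i, t j)) - f (x, y)\<bar> \<le> W + W / D\<^sup>2 * d1\<^sup>2 + W / D\<^sup>2 * d2\<^sup>2"
    by (intro double_weighted_sum_deviation_le[OF P P_moment Q Q_moment])
  also have "\<dots> = W + W / D\<^sup>2 * D\<^sup>2"
    by (simp add: D_sq distrib_left)
  also have "\<dots> \<le> 2 * W"
    using \<open>W \<ge> 0\<close> by (cases "D = 0") simp_all
  finally show ?thesis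
    by (simp add: W_def D_def)
qed

lemma product_operator_deviation_le_partial_moduli:
  fixes f :: "real \<times> real \<Rightarrow> real" and P Q s t :: "nat \<Rightarrow> real"
  assumes f: "bounded (f ` quadrant)" and "x \<ge> 0" "y \<ge> 0" "\<And>i. s i \<ge> 0" "\<And>j. t j \<ge> 0"
    and P: "probability_weights P" and P_moment: "(\<lambda>i. P i * (s i - x)\<^sup>2) sums d1\<^sup>2"
    and Q: "probability_weights Q" and Q_moment: "(\<lambda>j. Q j * (t j - y)\<^sup>2) sums d2\<^sup>2"
    and "d1 \<ge> 0" "d2 \<ge> 0"
  shows "\<bar>(\<Sum>i. \<Sum>j. P i * Q j * f (s i, t j)) - f (x, y)\<bar>
           \<le> 2 * (partial_modulus1 f d1 + partial_modulus2 f d2)"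
proof -
  define W1 W2 where "W1 = partial_modulus1 f d1" and "W2 = partial_modulus2 f d2"
  have "W1 \<ge> 0" "W2 \<ge> 0"
    using partial_modulus1_ge[OF f, of 0 0 0 d1] partial_modulus2_ge[OF f, of 0 0 0 d2] \<open>d1 \<ge> 0\<close> \<open>d2 \<ge> 0\<close>
    by (simp_all add: W1_def W2_def)
  have first: "\<bar>f (s i, t j) - f (x, t j)\<bar> \<le> W1 + W1 / d1\<^sup>2 * (s i - x)\<^sup>2" if "P i \<noteq> 0" for i j
  proof (cases "d1 = 0")
    case True
    then have "s i = x"
      using P_moment by (intro second_moment_zero_imp_eq[OF P _ that]) simp
    then show ?thesis
      using \<open>W1 \<ge> 0\<close> by simp
  next
    case False
    then show ?thesis
      using abs_diff_le_partial_modulus1[OF f] assms(2-5) \<open>d1 \<ge> 0\<close> by (simp add: W1_def)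
  qed
  have second: "\<bar>f (x, t j) - f (x, y)\<bar> \<le> W2 + W2 / d2\<^sup>2 * (t j - y)\<^sup>2" if "Q j \<noteq> 0" for j
  proof (cases "d2 = 0")
    case True
    then have "t j = y"
      using Q_moment by (intro second_moment_zero_imp_eq[OF Q _ that]) simp
    then show ?thesis
      using \<open>W2 \<ge> 0\<close> by simp
  next
    case False
    then show ?thesis
      using abs_diff_le_partial_modulus2[OF f] assms(2-5) \<open>d2 \<ge> 0\<close> by (simp add: W2_def)
  qed
  have "\<bar>(\<Sum>i. \<Sum>j. P i * Q j * f (s i, t j)) - f (x, y)\<bar>
      \<le> (W1 + W2) + W1 / d1\<^sup>2 * d1\<^sup>2 + W2 / d2\<^sup>2 * d2\<^sup>2"
  proof (rule double_weighted_sum_deviation_le[OF P P_moment Q Q_moment])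
    fix i j
    assume "P i \<noteq> 0" "Q j \<noteq> 0"
    then show "\<bar>f (s i, t j) - f (x, y)\<bar> \<le> W1 + W2 + W1 / d1\<^sup>2 * (s i - x)\<^sup>2 + W2 / d2\<^sup>2 * (t j - y)\<^sup>2"
      using first[of i j] second[of j] by linarith
  qed
  also have "\<dots> \<le> 2 * (W1 + W2)"
    using \<open>W1 \<ge> 0\<close> \<open>W2 \<ge> 0\<close> by (cases "d1 = 0"; cases "d2 = 0") simp_all
  finally show ?thesis
    by (simp add: W1_def W2_def)
qed

definition poisson_weight :: "real \<Rightarrow> nat \<Rightarrow> real" where
  "poisson_weight r k = exp (- r) * r ^ k / fact k"

lemma exp_series_sums: "(\<lambda>k. r ^ k / fact k) sums exp (r::real)"
  using exp_converges[of r] by (simp add: divide_inverse mult.commute)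

lemma exp_series_sums_mult_index: "(\<lambda>k. real k * r ^ k / fact k) sums (r * exp (r::real))"
proof -
  have "(\<lambda>k. real (Suc k) * r ^ Suc k / fact (Suc k)) = (\<lambda>k. r * (r ^ k / fact k))"
    by (simp add: fun_eq_iff divide_simps add_pos_nonneg)
  then have "(\<lambda>k. real (Suc k) * r ^ Suc k / fact (Suc k)) sums (r * exp r)"
    using sums_mult[OF exp_series_sums] by simp
  then show ?thesis
    by (subst (asm) sums_Suc_iff) simp
qed

lemma exp_series_sums_mult_index_sq:
  "(\<lambda>k. (real k)\<^sup>2 * r ^ k / fact k) sums (r * (r * exp r + exp (r::real)))"
proof -
  have "(\<lambda>k. (real (Suc k))\<^sup>2 * r ^ Suc k / fact (Suc k))
      = (\<lambda>k. r * (real k * r ^ k / fact k + r ^ k / fact k))"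
    by (simp add: fun_eq_iff divide_simps add_pos_nonneg power2_eq_square) (simp add: algebra_simps)
  then have "(\<lambda>k. (real (Suc k))\<^sup>2 * r ^ Suc k / fact (Suc k)) sums (r * (r * exp r + exp r))"
    using sums_mult[OF sums_add[OF exp_series_sums_mult_index exp_series_sums]] by simp
  then show ?thesis
    by (subst (asm) sums_Suc_iff) simp
qed

lemma probability_weights_poisson:
  assumes "r \<ge> 0"
  shows "probability_weights (poisson_weight r)"
proof -
  have "(\<lambda>k. exp (- r) * (r ^ k / fact k)) sums (exp (- r) * exp r)"
    by (rule sums_mult[OF exp_series_sums])
  moreover have "(\<lambda>k. exp (- r) * (r ^ k / fact k)) = poisson_weight r"
    by (simp add: fun_eq_iff poisson_weight_def)
  ultimately show ?thesis
    using assms by (simp add: probability_weights_def poisson_weight_def exp_add[symmetric])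
qed

lemma poisson_weight_second_moment_sums:
  "(\<lambda>k. poisson_weight r k * (real k / c - x)\<^sup>2) sums ((r\<^sup>2 + r) / c\<^sup>2 - 2 * x * r / c + x\<^sup>2)"
proof -
  have "(\<lambda>k. exp (- r) * ((real k)\<^sup>2 * r ^ k / fact k / c\<^sup>2
           - 2 * x / c * (real k * r ^ k / fact k) + x\<^sup>2 * (r ^ k / fact k)))
        sums (exp (- r) * (r * (r * exp r + exp r) / c\<^sup>2 - 2 * x / c * (r * exp r) + x\<^sup>2 * exp r))"
    by (intro sums_mult sums_add sums_diff sums_divide exp_series_sums
          exp_series_sums_mult_index exp_series_sums_mult_index_sq)
  moreover have "(\<lambda>k. exp (- r) * ((real k)\<^sup>2 * r ^ k / fact k / c\<^sup>2
           - 2 * x / c * (real k * r ^ k / fact k) + x\<^sup>2 * (r ^ k / fact k)))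
      = (\<lambda>k. poisson_weight r k * (real k / c - x)\<^sup>2)"
    by (simp add: fun_eq_iff poisson_weight_def power2_diff field_simps)
  moreover have "exp (- r) * (r * (r * exp r + exp r) / c\<^sup>2 - 2 * x / c * (r * exp r) + x\<^sup>2 * exp r)
      = (r\<^sup>2 + r) / c\<^sup>2 - 2 * x * r / c + x\<^sup>2"
    by (simp add: exp_minus_inverse field_simps power2_eq_square)
  ultimately show ?thesis
    by simp
qed

definition poisson_rate :: "real \<Rightarrow> nat \<Rightarrow> real \<Rightarrow> real" where
  "poisson_rate a m x = x * ln a / (a powr (1 / real m) - 1)"

lemma poisson_rate_nonneg:
  assumes "a > 1" "m \<ge> 1" "x \<ge> 0"
  shows "poisson_rate a m x \<ge> 0"
proof -
  have "a powr (1 / real m) > 1"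
    using assms by simp
  then show ?thesis
    using assms unfolding poisson_rate_def by (intro divide_nonneg_pos) auto
qed

lemma s_kernel_eq_poisson_weights:
  assumes "a > 1" "m \<ge> 1" "n \<ge> 1"
  shows "s_kernel a m n k1 k2 x y
           = poisson_weight (poisson_rate a m x) k1 * poisson_weight (poisson_rate a n y) k2"
proof -
  define b c where "b = a powr (1 / real m) - 1" and "c = a powr (1 / real n) - 1"
  have "b > 0" "c > 0"
    using assms by (simp_all add: b_def c_def)
  moreover have "a powr (- x / b) = exp (- (x * ln a / b))" "a powr (- y / c) = exp (- (y * ln a / c))"
    using assms(1) by (simp_all add: powr_def)
  ultimately show ?thesis
    unfolding s_kernel_def poisson_weight_def poisson_rate_def b_def[symmetric] c_def[symmetric]
    by (simp add: power_add field_simps)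
qed

lemma Yhat_eq_poisson_double_sum:
  assumes "a > 1" "m \<ge> 1" "n \<ge> 1"
  shows "Yhat a m n f x y = (\<Sum>i. \<Sum>j. poisson_weight (poisson_rate a m x) i
           * poisson_weight (poisson_rate a n y) j * f (real i / real m, real j / real n))"
  using assms by (simp add: Yhat_def s_kernel_eq_poisson_weights)

lemma delta_m_nonneg:
  assumes "a > 1" "m \<ge> 1" "x \<ge> 0"
  shows "delta_m a m x \<ge> 0"
proof -
  define b where "b = a powr (1 / real m) - 1"
  have "b > 0" "ln a > 0"
    using assms by (simp_all add: b_def)
  have "real m ^ 2 * x * b\<^sup>2 - b * ln a * (2 * real m * x - 1) + x * (ln a)\<^sup>2
      = x * (real m * b - ln a)\<^sup>2 + b * ln a"
    by (simp add: algebra_simps power2_eq_square)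
  then show ?thesis
    using \<open>b > 0\<close> \<open>ln a > 0\<close> assms(3) by (simp add: delta_m_def b_def[symmetric])
qed

lemma poisson_rate_second_moment_sums:
  assumes "a > 1" "m \<ge> 1" "x \<ge> 0"
  shows "(\<lambda>k. poisson_weight (poisson_rate a m x) k * (real k / real m - x)\<^sup>2)
           sums (delta_m a m x)\<^sup>2"
proof -
  define b where "b = a powr (1 / real m) - 1"
  define r where "r = poisson_rate a m x"
  define E where "E = (r\<^sup>2 + r) / (real m)\<^sup>2 - 2 * x * r / real m + x\<^sup>2"
  have moment: "(\<lambda>k. poisson_weight r k * (real k / real m - x)\<^sup>2) sums E"
    unfolding E_def by (rule poisson_weight_second_moment_sums)
  have "E \<ge> 0"
    using sums_le[OF _ sums_zero moment] probability_weights_poisson poisson_rate_nonneg[OF assms]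
    by (simp add: r_def probability_weights_def)
  have "b > 0"
    using assms by (simp add: b_def)
  moreover have "x * (real m ^ 2 * x * b\<^sup>2 - b * ln a * (2 * real m * x - 1) + x * (ln a)\<^sup>2)
      / (real m ^ 2 * b\<^sup>2) = E"
    using assms \<open>b > 0\<close> unfolding E_def r_def poisson_rate_def b_def[symmetric]
    by (simp add: field_simps power2_eq_square)
  ultimately have "(delta_m a m x)\<^sup>2 = E"
    using \<open>E \<ge> 0\<close>
    by (simp add: delta_m_def b_def)
  with moment show ?thesis
    by (simp add: r_def)
qed

theorem mainTheorem3:
  fixes a :: real and f :: "real \<times> real \<Rightarrow> real" and m n :: nat and x y :: real
  assumes "a > 1"
    and "continuous_on quadrant f" and "bounded (f ` quadrant)"
    and "m \<ge> 1" and "n \<ge> 1"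
    and "x \<ge> 0" and "y \<ge> 0"
  shows "\<bar>Yhat a m n f x y - f (x, y)\<bar>
           \<le> 2 * total_modulus f (sqrt ((delta_m a m x)^2 + (delta_m a n y)^2))
       \<and> \<bar>Yhat a m n f x y - f (x, y)\<bar>
           \<le> 2 * (partial_modulus1 f (delta_m a m x) + partial_modulus2 f (delta_m a n y))"
proof -
  define P Q where "P = poisson_weight (poisson_rate a m x)" and "Q = poisson_weight (poisson_rate a n y)"
  have P: "probability_weights P" and Q: "probability_weights Q"
    using probability_weights_poisson poisson_rate_nonneg assms by (simp_all add: P_def Q_def)
  have P_moment: "(\<lambda>i. P i * (real i / real m - x)\<^sup>2) sums (delta_m a m x)\<^sup>2"
    and Q_moment: "(\<lambda>j. Q j * (real j / real n - y)\<^sup>2) sums (delta_m a n y)\<^sup>2"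
    using poisson_rate_second_moment_sums assms by (simp_all add: P_def Q_def)
  have "Yhat a m n f x y = (\<Sum>i. \<Sum>j. P i * Q j * f (real i / real m, real j / real n))"
    using Yhat_eq_poisson_double_sum assms(1,4,5) by (simp add: P_def Q_def)
  then show ?thesis
    using product_operator_deviation_le_total_modulus[OF assms(3,6,7) _ _ P P_moment Q Q_moment]
      product_operator_deviation_le_partial_moduli[OF assms(3,6,7) _ _ P P_moment Q Q_moment
        delta_m_nonneg[OF assms(1,4,6)] delta_m_nonneg[OF assms(1,5,7)]]
    by simp
qed

end
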